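(* Let $(A^{\mathbb{Z}},T)$ be the Pacman cellular automaton and let $w\in A^{+}$ be a nonempty finite word. For each integer $i\geq 0$ define $$x^{i}= {}^{\infty}\mathtt{0}\,.\,w\,\mathtt{1}\,\mathtt{0}^{i}\,\mathtt{K}\,\mathtt{0}^{\infty},$$ that is, $x^i$ has the word $w$ starting at coordinate $0$, followed immediately by the symbol $\mathtt{1}$, then $i$ copies of $\mathtt{0}$, then the symbol $\mathtt{K}$, and all other coordinates equal to $\mathtt{0}$. Then there exist integers $N,M\geq 0$ such that for every integer $j\geq 0$, $$(T^{N+j}x^{M+j})_{0}\in\{\mathtt{G},\mathtt{K},\mathtt{D}\}.$$
   Context: Let $A=\{\mathtt{0},\mathtt{1},\mathtt{G},\mathtt{K},\mathtt{P},\mathtt{D}\}$ (intended meanings: $\mathtt{0}$ empty space, $\mathtt{1}$ empty door, $\mathtt{G}$ ghost, $\mathtt{K}$ keymaster ghost, $\mathtt{P}$ pacman, $\mathtt{D}$ door with ghost). $A^{+}$ denotes the set of nonempty finite words over $A$. The Pacman CA is the map $T:A^{\mathbb{Z}}\to A^{\mathbb{Z}}$ defined coordinatewise as follows, writing $a=x_{i-1}$, $b=x_i$, $c=x_{i+1}$: - $(Tx)_i=\mathtt{0}$ if $\big(a\in\{\mathtt{0},\mathtt{G},\mathtt{K}\}\wedge[(b\in\{\mathtt{0},\mathtt{G},\mathtt{K}\}\wedge c\in\{\mathtt{0},\mathtt{1},\mathtt{P}\})\vee(b=\mathtt{P}\wedge c\notin\{\mathtt{1},\mathtt{D}\})]\big)\vee\big(a\in\{\mathtt{1},\mathtt{D}\}\wedge[(b\in\{\mathtt{0},\mathtt{K}\}\wedge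 c\in\{\mathtt{0},\mathtt{1},\mathtt{P}\})\vee(b=\mathtt{P}\wedge c\notin\{\mathtt{1},\mathtt{D}\})]\big)$; - $(Tx)_i=\mathtt{1}$ if $b\in\{\mathtt{1},\mathtt{D}\}\wedge c\notin\{\mathtt{K},\mathtt{D}\}$; - $(Tx)_i=\mathtt{G}$ if $(a\in\{\mathtt{0},\mathtt{G},\mathtt{K}\}\wedge b\in\{\mathtt{0},\mathtt{G},\mathtt{K}\}\wedge c\in\{\mathtt{G},\mathtt{D}\})\vee(a\in\{\mathtt{1},\mathtt{D}\}\wedge b\in\{\mathtt{0},\mathtt{K}\}\wedge c=\mathtt{D})$; - $(Tx)_i=\mathtt{K}$ if $\big(c=\mathtt{K}\wedge[(a\in\{\mathtt{0},\mathtt{G},\mathtt{K}\}\wedge b\in\{\mathtt{0},\mathtt{G},\mathtt{K}\})\vee(a\in\{\mathtt{1},\mathtt{D}\}\wedge b\in\{\mathtt{0},\mathtt{K}\})]\big)\vee(a=\mathtt{P}\wedge b\notin\{\mathtt{1},\mathtt{D}\}\wedge c\in\{\mathtt{1},\mathtt{D}\})\vee(b=\mathtt{P}\wedge c\in\{\mathtt{1},\mathtt{D}\})$; - $(Tx)_i=\mathtt{P}$ if $\big(a=\mathtt{1}\wedge[(b\in\{\mathtt{0},\mathtt{K}\}\wedge c=\mathtt{G})\vee b=\mathtt{G}]\big)\vee(a=\mathtt{P}\wedge b\notin\{\mathtt{1},\mathtt{D}\}\wedge c\notin\{\mathtt{1},\mathtt{D}\})$; - $(Tx)_i=\mathtt{D}$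 if $b\in\{\mathtt{1},\mathtt{D}\}\wedge c\in\{\mathtt{K},\mathtt{D}\}$. Notation ${}^{\infty}\mathtt{0}\,.\,u\,\mathtt{0}^{\infty}$ means the point whose coordinates $0,1,\dots,|u|-1$ spell the word $u$ and all other coordinates are $\mathtt{0}$; the dot marks coordinate $0$. *)

theory Defs
  imports Main
begin

datatype cell = S0 | S1 | SG | SK | SP | SD
  (* S0 = 0 (empty space), S1 = 1 (empty door), SG = G, SK = K, SP = P, SD = D *)

definition pac_rule :: "cell \<Rightarrow> cell \<Rightarrow> cell \<Rightarrow> cell" where
  "pac_rule a b c =
    (if (a \<in> {S0,SG,SK} \<and> ((b \<in> {S0,SG,SK} \<and> c \<in> {S0,S1,SP}) \<or> (b = SP \<and> c \<notin> {S1,SD})))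
        \<or> (a \<in> {S1,SD} \<and> ((b \<in> {S0,SK} \<and> c \<in> {S0,S1,SP}) \<or> (b = SP \<and> c \<notin> {S1,SD})))
     then S0
     else if b \<in> {S1,SD} \<and> c \<notin> {SK,SD} then S1
     else if (a \<in> {S0,SG,SK} \<and> b \<in> {S0,SG,SK} \<and> c \<in> {SG,SD}) \<or> (a \<in> {S1,SD} \<and> b \<in> {S0,SK} \<and> c = SD)
     then SG
     else if (c = SK \<and> ((a \<in> {S0,SG,SK} \<and> b \<in> {S0,SG,SK}) \<or> (a \<in> {S1,SD} \<and> b \<in> {S0,SK})))
        \<or> (a = SP \<and> b \<notin> {S1,SD} \<and> c \<in> {S1,SD}) \<or> (b = SP \<and> c \<in> {S1,SD})
     then SK
     else if (a = S1 \<and> ((b \<in> {S0,SK} \<and> c = SG) \<or> b = SG)) \<or> (a = SP \<and> b \<notin> {S1,SD} \<and> c \<notin> {S1,SD})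
     then SP
     else SD)"

definition pacT :: "(int \<Rightarrow> cell) \<Rightarrow> (int \<Rightarrow> cell)" where
  "pacT x = (\<lambda>i. pac_rule (x (i - 1)) (x i) (x (i + 1)))"

definition word_pt :: "cell list \<Rightarrow> (int \<Rightarrow> cell)" where
  "word_pt u = (\<lambda>i. if 0 \<le> i \<and> i < int (length u) then u ! nat i else S0)"

end

(* Started from ^inf 0 . w 1 0^inf, the automaton keeps the door at |w| forever, never lets
   anything but 0, G, K appear left of the origin, and can only create doors. So the set of
   doors stabilises, and then every cell of [0, |w|] becomes quiescent (0 or 1), working
   leftwards from the last door: a door opens once its right neighbour is quiet, and inside a
   gap between doors first the ghosts (moving left, fed only by a G or D on their right), then
   the pacmen (moving right, fed only by a P on their left), then the keymasters die out.
   Hence after some time T the nonnegative half is a fixed word sigma over {0,1}.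
   A K started at distance M + j >= T to the right walks left through empty space and arrives
   next to sigma at time M + j. From then on sigma K evolves as a single particle (K, D, G
   or P) travelling through the doors of sigma, and a lexicographic potential decreases at
   every step until the particle sits at the origin as G, K or D. *)

theory Submission
  imports Defs
begin

lemma pac_rule_door: "b \<in> {S1,SD} \<Longrightarrow> pac_rule a b c = (if c \<in> {SK,SD} then SD else S1)"
  by (cases a; cases b; cases c; simp add: pac_rule_def)

lemma pac_rule_left_irrelevant: "a \<in> {S0,SG,SK} \<Longrightarrow> pac_rule a b c = pac_rule S0 b c"
  by (cases a; cases b; cases c; simp add: pac_rule_def)

lemma pac_rule_left_closed: "a \<in> {S0,SG,SK} \<Longrightarrow> b \<in> {S0,SG,SK} \<Longrightarrow> pac_rule a b c \<in> {S0,SG,SK}"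
  by (cases a; cases b; cases c; simp add: pac_rule_def)

lemma pac_rule_quiet: "a \<noteq> SP \<Longrightarrow> b \<in> {S0,S1} \<Longrightarrow> c \<in> {S0,S1,SP} \<Longrightarrow> pac_rule a b c = b"
  by (cases a; cases b; cases c; simp add: pac_rule_def)

lemma pac_rule_eq_SG_imp: "pac_rule a b c = SG \<Longrightarrow> c \<in> {SG,SD}"
  by (cases a; cases b; cases c; simp add: pac_rule_def)

lemma pac_rule_eq_SP_imp: "pac_rule a b c = SP \<Longrightarrow> a = S1 \<and> (b = SG \<or> c = SG) \<or> a = SP"
  by (cases a; cases b; cases c; simp add: pac_rule_def)

lemma pac_rule_eq_SK_imp: "pac_rule a b c = SK \<Longrightarrow> c = SK \<or> a = SP \<or> b = SP"
  by (cases a; cases b; cases c; simp add: pac_rule_def)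

lemma pacT_funpow_Suc_apply:
  "(pacT ^^ Suc t) x i = pac_rule ((pacT ^^ t) x (i - 1)) ((pacT ^^ t) x i) ((pacT ^^ t) x (i + 1))"
  by (simp add: pacT_def)

definition left_quiet :: "(int \<Rightarrow> cell) \<Rightarrow> bool" where
  "left_quiet x \<longleftrightarrow> (\<forall>i<0. x i \<in> {S0,SG,SK})"

lemma left_quiet_pacT:
  assumes "left_quiet x"
  shows "left_quiet (pacT x)"
  unfolding left_quiet_def
proof (intro allI impI)
  fix i :: int
  assume "i < 0"
  with assms have "x (i - 1) \<in> {S0,SG,SK}" "x i \<in> {S0,SG,SK}" by (simp_all add: left_quiet_def)
  then show "pacT x i \<in> {S0,SG,SK}" unfolding pacT_def by (rule pac_rule_left_closed)
qed

lemma word_pt_Nil [simp]: "word_pt [] i = S0"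
  by (auto simp: word_pt_def)

lemma word_pt_Cons_0 [simp]: "word_pt (b # u) 0 = b"
  by (simp add: word_pt_def)

lemma word_pt_Cons_pos:
  assumes "0 < i"
  shows "word_pt (b # u) i = word_pt u (i - 1)"
proof -
  from assms have "nat i = Suc (nat (i - 1))" by arith
  with assms show ?thesis by (auto simp: word_pt_def)
qed

lemma word_pt_in: "set u \<subseteq> A \<Longrightarrow> S0 \<in> A \<Longrightarrow> word_pt u i \<in> A"
  by (auto simp: word_pt_def)

text \<open>\<open>word_step a u\<close> is the nonnegative half of the image of any configuration that reads
  \<open>a\<close> at cell \<open>-1\<close> and \<open>u\<close> followed by zeros from cell \<open>0\<close> on.\<close>

fun word_step :: "cell \<Rightarrow> cell list \<Rightarrow> cell list" where
  "word_step a [] = (if a = SP then [SP] else [])"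
| "word_step a (b # u) = pac_rule a b (word_pt u 0) # word_step b u"

lemma word_pt_word_step:
  "0 \<le> k \<Longrightarrow> word_pt (word_step a u) k =
     pac_rule (if k = 0 then a else word_pt u (k - 1)) (word_pt u k) (word_pt u (k + 1))"
proof (induction u arbitrary: a k)
  case Nil
  then show ?case
    by (cases "k = 0"; cases a) (auto simp: pac_rule_def word_pt_Cons_pos)
next
  case (Cons b u)
  show ?case
  proof (cases "k = 0")
    case False
    with Cons.prems have "0 < k" by simp
    with Cons.IH[of "k - 1" b] show ?thesis
      by (auto simp: word_pt_Cons_pos)
  qed (cases u; simp add: word_pt_Cons_pos)
qed

definition word_config :: "(int \<Rightarrow> cell) \<Rightarrow> cell list \<Rightarrow> bool" where
  "word_config x u \<longleftrightarrow> left_quiet x \<and> (\<forall>i\<ge>0. x i = word_pt u i)"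

lemma word_config_pacT:
  assumes "word_config x u"
  shows "word_config (pacT x) (word_step S0 u)"
proof -
  have lq: "left_quiet x" and xu: "\<And>i. 0 \<le> i \<Longrightarrow> x i = word_pt u i"
    using assms by (simp_all add: word_config_def)
  have "pacT x i = word_pt (word_step S0 u) i" if "0 \<le> i" for i
  proof (cases "i = 0")
    case True
    from lq have "x (-1) \<in> {S0,SG,SK}" by (simp add: left_quiet_def)
    then have "pacT x 0 = pac_rule S0 (x 0) (x 1)"
      unfolding pacT_def by (simp add: pac_rule_left_irrelevant[of "x (-1)"])
    with True show ?thesis by (simp add: xu word_pt_word_step)
  next
    case False
    with that have "pacT x i = pac_rule (word_pt u (i - 1)) (word_pt u i) (word_pt u (i + 1))"
      by (simp add: pacT_def xu)
    with that False show ?thesis by (simp add: word_pt_word_step)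
  qed
  with lq show ?thesis by (simp add: word_config_def left_quiet_pacT)
qed

lemma word_step_quiet_prefix:
  "set q \<subseteq> {S0,S1} \<Longrightarrow> a \<noteq> SP \<Longrightarrow> word_pt v 0 \<in> {S0,S1,SP} \<Longrightarrow>
     word_step a (q @ v) = q @ word_step (last (a # q)) v"
proof (induction q arbitrary: a)
  case (Cons b q)
  have "word_pt (q @ v) 0 \<in> {S0,S1,SP}" using Cons.prems by (cases q) auto
  with Cons.prems have "pac_rule a b (word_pt (q @ v) 0) = b" by (simp add: pac_rule_quiet)
  moreover have "word_step b (q @ v) = q @ word_step (last (b # q)) v"
    by (rule Cons.IH) (use Cons.prems in auto)
  ultimately show ?case by simp
qed simp

lemma word_step_quiet:
  assumes "set R \<subseteq> {S0,S1}" "a \<noteq> SP"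
  shows "word_step a R = R"
proof -
  have "last (a # R) \<in> set (a # R)" by (rule last_in_set) simp
  with assms have "last (a # R) \<noteq> SP" by auto
  then show ?thesis using word_step_quiet_prefix[of R a "[]"] assms by simp
qed

lemma word_step_pair:
  assumes "set q \<subseteq> {S0,S1}" "b \<in> {S0,S1,SP}" "c \<noteq> SP" "set R \<subseteq> {S0,S1}"
  shows "word_step S0 (q @ b # c # R) = q @ pac_rule (last (S0 # q)) b c # pac_rule b c (word_pt R 0) # R"
proof -
  have "word_step S0 (q @ b # c # R) = q @ word_step (last (S0 # q)) (b # c # R)"
    using assms by (intro word_step_quiet_prefix) auto
  with assms show ?thesis by (simp add: word_step_quiet)
qed

text \<open>A \<open>G\<close> or \<open>P\<close> always has a \<open>1\<close> on its right: that door is what eventually turns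
  \<open>P\<close> back into \<open>K\<close>.\<close>

definition one_particle :: "cell list \<Rightarrow> cell \<Rightarrow> cell list \<Rightarrow> bool" where
  "one_particle q h R \<longleftrightarrow> set q \<subseteq> {S0,S1} \<and> set R \<subseteq> {S0,S1} \<and> h \<in> {SK,SD,SG,SP} \<and>
     (h \<in> {SG,SP} \<longrightarrow> S1 \<in> set R)"

text \<open>Lexicographic potential: doors left of the particle (a \<open>D\<close> counting as one),
  then the kind of the particle (\<open>G > P > K > D\<close>), then the distance it still travels
  (leftwards for \<open>K\<close>, \<open>D\<close>, \<open>G\<close>; rightwards to the next door for \<open>P\<close>).\<close>

definition particle_order :: "((cell list \<times> cell \<times> cell list) \<times> (cell list \<times> cell \<times> cell list)) set" where
  "particle_order = measures
     [\<lambda>(q, h, R). count_list q S1 + (if h = SD then 1 else 0),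
      \<lambda>(q, h, R). (case h of SG \<Rightarrow> 3 | SP \<Rightarrow> 2 | SK \<Rightarrow> 1 | _ \<Rightarrow> 0),
      \<lambda>(q, h, R). if h = SP then length (takeWhile (\<lambda>c. c = S0) R) else length q]"

lemma wf_particle_order: "wf particle_order"
  by (simp add: particle_order_def)

lemma pac_rule_particle_left:
  assumes "a \<in> {S0,S1}" "b \<in> {S0,S1}" "c \<in> {S0,S1}"
  shows "pac_rule a b SK = (if b = S0 then SK else SD)" "pac_rule b SK c = S0"
    "pac_rule a b SD = (if b = S0 then SG else SD)" "pac_rule b SD c = S1"
    "pac_rule a b SG = (if b = S1 then S1 else if a = S0 then SG else SP)"
    "pac_rule b SG c = (if b = S1 then SP else S0)"
  using assms by (auto simp: pac_rule_def)

lemma one_particle_step_left: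
  assumes "one_particle (q @ [b]) h R" "h \<noteq> SP"
  obtains q' h' R' where "one_particle q' h' R'" "word_step S0 (q @ b # h # R) = q' @ h' # R'"
    "((q', h', R'), (q @ [b], h, R)) \<in> particle_order"
proof -
  define a where "a = last (S0 # q)"
  define c where "c = word_pt R 0"
  have q: "set q \<subseteq> {S0,S1}" and b: "b \<in> {S0,S1}" and R: "set R \<subseteq> {S0,S1}"
    and h: "h \<in> {SK,SD,SG}" and inv: "h = SG \<Longrightarrow> S1 \<in> set R"
    using assms by (auto simp: one_particle_def)
  have "a \<in> set (S0 # q)" unfolding a_def by (rule last_in_set) simp
  with q have a: "a \<in> {S0,S1}" by auto
  from R have c: "c \<in> {S0,S1}" unfolding c_def by (intro word_pt_in) auto
  have step: "word_step S0 (q @ b # h # R) = q @ pac_rule a b h # pac_rule b h c # R"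
    unfolding a_def c_def by (rule word_step_pair) (use q b R assms(2) in auto)
  note defs = pac_rule_particle_left one_particle_def particle_order_def
  consider (K0) "h = SK" "b = S0" | (K1) "h = SK" "b = S1" | (D0) "h = SD" "b = S0"
    | (D1) "h = SD" "b = S1" | (G1) "h = SG" "b = S1"
    | (G00) "h = SG" "b = S0" "a = S0" | (G10) "h = SG" "b = S0" "a = S1"
    using h b a by auto
  then show ?thesis
  proof cases
    case K0
    show ?thesis by (rule that[of q SK "S0 # R"]) (use K0 step a c q R in \<open>auto simp: defs\<close>)
  next
    case K1
    show ?thesis by (rule that[of q SD "S0 # R"]) (use K1 step a c q R in \<open>auto simp: defs\<close>)
  next
    case D0
    show ?thesis by (rule that[of q SG "S1 # R"]) (use D0 step a c q R in \<open>auto simp: defs\<close>)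
  next
    case D1
    show ?thesis by (rule that[of q SD "S1 # R"]) (use D1 step a c q R in \<open>auto simp: defs\<close>)
  next
    case G1
    show ?thesis
      by (rule that[of "q @ [S1]" SP R]) (use G1 step a c q R inv in \<open>auto simp: defs\<close>)
  next
    case G00
    show ?thesis by (rule that[of q SG "S0 # R"]) (use G00 step c q R inv in \<open>auto simp: defs\<close>)
  next
    case G10
    show ?thesis by (rule that[of q SP "S0 # R"]) (use G10 step c q R inv in \<open>auto simp: defs\<close>)
  qed
qed

lemma pac_rule_particle_right:
  assumes "a \<in> {S0,S1}" "c \<in> {S0,S1}"
  shows "pac_rule a SP S1 = SK" "pac_rule SP S1 c = S1"
    "pac_rule a SP S0 = S0" "pac_rule SP S0 c = (if c = S0 then SP else SK)"
  using assms by (auto simp: pac_rule_def)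

lemma one_particle_step_SP:
  assumes "one_particle q SP R"
  obtains q' h' R' where "one_particle q' h' R'" "word_step S0 (q @ SP # R) = q' @ h' # R'"
    "((q', h', R'), (q, SP, R)) \<in> particle_order"
proof -
  have q: "set q \<subseteq> {S0,S1}" and R: "set R \<subseteq> {S0,S1}" and inv: "S1 \<in> set R"
    using assms by (auto simp: one_particle_def)
  then obtain r R1 where R_eq: "R = r # R1" by (cases R) auto
  with R have r: "r \<in> {S0,S1}" and R1: "set R1 \<subseteq> {S0,S1}" by auto
  define a where "a = last (S0 # q)"
  define c where "c = word_pt R1 0"
  have "a \<in> set (S0 # q)" unfolding a_def by (rule last_in_set) simp
  with q have a: "a \<in> {S0,S1}" by auto
  from R1 have c: "c \<in> {S0,S1}" unfolding c_def by (intro word_pt_in) auto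
  have step: "word_step S0 (q @ SP # R) = q @ pac_rule a SP r # pac_rule SP r c # R1"
    unfolding a_def c_def R_eq by (rule word_step_pair) (use q r R1 in auto)
  note defs = pac_rule_particle_right one_particle_def particle_order_def
  consider (door) "r = S1" | (empty) "r = S0" "c = S0" | (door_next) "r = S0" "c = S1"
    using r c by auto
  then show ?thesis
  proof cases
    case door
    show ?thesis
      by (rule that[of q SK "S1 # R1"]) (use door step a c q R R_eq in \<open>auto simp: defs\<close>)
  next
    case empty
    with inv R_eq have "S1 \<in> set R1" by simp
    show ?thesis
      by (rule that[of "q @ [S0]" SP R1]) (use empty \<open>S1 \<in> set R1\<close> step a c q R1 R_eq in \<open>auto simp: defs\<close>)
  next
    case door_next
    show ?thesis
      by (rule that[of "q @ [S0]" SK R1]) (use door_next step a c q R1 R_eq in \<open>auto simp: defs\<close>)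
  qed
qed

lemma one_particle_step:
  assumes "one_particle q h R" "q \<noteq> [] \<or> h = SP"
  obtains q' h' R' where "one_particle q' h' R'" "word_step S0 (q @ h # R) = q' @ h' # R'"
    "((q', h', R'), (q, h, R)) \<in> particle_order"
proof (cases "h = SP")
  case True
  with assms(1) that show ?thesis using one_particle_step_SP by blast
next
  case False
  with assms(2) obtain q0 b where "q = q0 @ [b]" by (metis rev_exhaust)
  with assms(1) False that show ?thesis using one_particle_step_left[of q0 b h R] by auto
qed

lemma one_particle_reaches_origin:
  assumes "one_particle q h R"
  shows "\<exists>s. \<forall>x. word_config x (q @ h # R) \<longrightarrow> (pacT ^^ s) x 0 \<in> {SG,SK,SD}"
  using assms
proof (induction "(q, h, R)" arbitrary: q h R rule: wf_induct_rule[OF wf_particle_order])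
  case (1 q h R)
  show ?case
  proof (cases "q = [] \<and> h \<noteq> SP")
    case True
    with "1.prems" show ?thesis
      by (intro exI[of _ 0]) (auto simp: word_config_def one_particle_def)
  next
    case False
    obtain q' h' R' where next_particle: "one_particle q' h' R'"
      and step: "word_step S0 (q @ h # R) = q' @ h' # R'"
      and smaller: "((q', h', R'), (q, h, R)) \<in> particle_order"
      by (rule one_particle_step[OF "1.prems"]) (use False in auto)
    obtain s where s: "\<forall>x. word_config x (q' @ h' # R') \<longrightarrow> (pacT ^^ s) x 0 \<in> {SG,SK,SD}"
      using "1.hyps"[OF smaller next_particle] by blast
    have "\<forall>x. word_config x (q @ h # R) \<longrightarrow> (pacT ^^ Suc s) x 0 \<in> {SG,SK,SD}"
      using s word_config_pacT[of _ "q @ h # R", unfolded step] by (simp add: funpow_swap1)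
    then show ?thesis by blast
  qed
qed

lemma drift_extinction:
  fixes S :: "nat \<Rightarrow> int \<Rightarrow> bool" and d l r :: int
  assumes "d \<noteq> 0"
    and "\<forall>\<^sub>F t in sequentially. \<forall>i\<in>{l..r}. S (Suc t) i \<longrightarrow> i + d \<in> {l..r} \<and> S t (i + d)"
  shows "\<forall>\<^sub>F t in sequentially. \<forall>i\<in>{l..r}. \<not> S t i"
proof -
  obtain t0 where t0: "\<forall>t\<ge>t0. \<forall>i\<in>{l..r}. S (Suc t) i \<longrightarrow> i + d \<in> {l..r} \<and> S t (i + d)"
    using assms(2) unfolding eventually_sequentially by blast
  have trace: "i + int k * d \<in> {l..r}" if "i \<in> {l..r}" "S (t0 + k) i" for k i
    using that
  proof (induction k arbitrary: i)
    case (Suc k)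
    with t0[rule_format, of "t0 + k" i] have "i + d \<in> {l..r}" "S (t0 + k) (i + d)" by auto
    then have "i + d + int k * d \<in> {l..r}" by (rule Suc.IH)
    then show ?case by (simp add: algebra_simps)
  qed simp
  have "\<not> S t i" if "t0 + nat (r - l + 1) \<le> t" "i \<in> {l..r}" for t i
  proof
    assume "S t i"
    with that trace[of i "t - t0"] have "i + int (t - t0) * d \<in> {l..r}" by simp
    with that(2) have "\<bar>int (t - t0) * d\<bar> \<le> r - l" by auto
    moreover have "int (t - t0) \<le> \<bar>int (t - t0) * d\<bar>"
      using \<open>d \<noteq> 0\<close> by (metis abs_mult abs_of_nat mult.right_neutral mult_left_mono
          of_nat_0_le_iff zero_less_abs_iff int_one_le_iff_zero_less)
    ultimately show False using that(1) by linarith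
  qed
  then show ?thesis unfolding eventually_sequentially by blast
qed

lemma gap_SG_vanishes:
  assumes "\<forall>\<^sub>F t in sequentially. (\<forall>i\<in>{l..r}. (pacT ^^ t) x i \<noteq> SD) \<and> (pacT ^^ t) x (r + 1) = S1"
  shows "\<forall>\<^sub>F t in sequentially. \<forall>i\<in>{l..r}. (pacT ^^ t) x i \<noteq> SG"
proof (rule drift_extinction[of 1])
  show "\<forall>\<^sub>F t in sequentially. \<forall>i\<in>{l..r}.
      (pacT ^^ Suc t) x i = SG \<longrightarrow> i + 1 \<in> {l..r} \<and> (pacT ^^ t) x (i + 1) = SG"
    using assms
  proof eventually_elim
    case (elim t)
    show ?case
    proof (intro ballI impI)
      fix i assume i: "i \<in> {l..r}" and "(pacT ^^ Suc t) x i = SG"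
      then have "(pacT ^^ t) x (i + 1) \<in> {SG,SD}"
        unfolding pacT_funpow_Suc_apply by (intro pac_rule_eq_SG_imp)
      moreover from i have "i = r \<or> i + 1 \<in> {l..r}" by auto
      ultimately show "i + 1 \<in> {l..r} \<and> (pacT ^^ t) x (i + 1) = SG"
        using elim by auto
    qed
  qed
qed simp

lemma gap_SP_vanishes:
  assumes "\<forall>\<^sub>F t in sequentially. (\<forall>i\<in>{l..r}. (pacT ^^ t) x i \<noteq> SG) \<and>
      (pacT ^^ t) x (r + 1) = S1 \<and> (pacT ^^ t) x (l - 1) \<noteq> SP"
  shows "\<forall>\<^sub>F t in sequentially. \<forall>i\<in>{l..r}. (pacT ^^ t) x i \<noteq> SP"
proof (rule drift_extinction[of "-1"])
  show "\<forall>\<^sub>F t in sequentially. \<forall>i\<in>{l..r}.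
      (pacT ^^ Suc t) x i = SP \<longrightarrow> i + -1 \<in> {l..r} \<and> (pacT ^^ t) x (i + -1) = SP"
    using assms
  proof eventually_elim
    case (elim t)
    show ?case
    proof (intro ballI impI)
      fix i assume i: "i \<in> {l..r}" and "(pacT ^^ Suc t) x i = SP"
      then have "(pacT ^^ t) x (i - 1) = S1 \<and> ((pacT ^^ t) x i = SG \<or> (pacT ^^ t) x (i + 1) = SG)
          \<or> (pacT ^^ t) x (i - 1) = SP"
        unfolding pacT_funpow_Suc_apply by (intro pac_rule_eq_SP_imp)
      moreover from i have "i = r \<or> i + 1 \<in> {l..r}" "i = l \<or> i - 1 \<in> {l..r}" by auto
      ultimately show "i + -1 \<in> {l..r} \<and> (pacT ^^ t) x (i + -1) = SP"
        using elim i by auto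
    qed
  qed
qed simp

lemma gap_SK_vanishes:
  assumes "\<forall>\<^sub>F t in sequentially. (\<forall>i\<in>{l..r}. (pacT ^^ t) x i \<noteq> SP) \<and>
      (pacT ^^ t) x (r + 1) = S1 \<and> (pacT ^^ t) x (l - 1) \<noteq> SP"
  shows "\<forall>\<^sub>F t in sequentially. \<forall>i\<in>{l..r}. (pacT ^^ t) x i \<noteq> SK"
proof (rule drift_extinction[of 1])
  show "\<forall>\<^sub>F t in sequentially. \<forall>i\<in>{l..r}.
      (pacT ^^ Suc t) x i = SK \<longrightarrow> i + 1 \<in> {l..r} \<and> (pacT ^^ t) x (i + 1) = SK"
    using assms
  proof eventually_elim
    case (elim t)
    show ?case
    proof (intro ballI impI)
      fix i assume i: "i \<in> {l..r}" and "(pacT ^^ Suc t) x i = SK"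
      then have "(pacT ^^ t) x (i + 1) = SK \<or> (pacT ^^ t) x (i - 1) = SP \<or> (pacT ^^ t) x i = SP"
        unfolding pacT_funpow_Suc_apply by (intro pac_rule_eq_SK_imp)
      moreover from i have "i = r \<or> i + 1 \<in> {l..r}" "i = l \<or> i - 1 \<in> {l..r}" by auto
      ultimately show "i + 1 \<in> {l..r} \<and> (pacT ^^ t) x (i + 1) = SK"
        using elim i by auto
    qed
  qed
qed simp

lemma gap_clears:
  assumes no_door: "\<forall>\<^sub>F t in sequentially. \<forall>i\<in>{l..r}. (pacT ^^ t) x i \<notin> {S1,SD}"
    and right_door: "\<forall>\<^sub>F t in sequentially. (pacT ^^ t) x (r + 1) = S1"
    and left_no_SP: "\<forall>\<^sub>F t in sequentially. (pacT ^^ t) x (l - 1) \<noteq> SP"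
  shows "\<forall>\<^sub>F t in sequentially. \<forall>i\<in>{l..r}. (pacT ^^ t) x i = S0"
proof -
  from no_door right_door
  have "\<forall>\<^sub>F t in sequentially. (\<forall>i\<in>{l..r}. (pacT ^^ t) x i \<noteq> SD) \<and> (pacT ^^ t) x (r + 1) = S1"
    by eventually_elim blast
  then have no_SG: "\<forall>\<^sub>F t in sequentially. \<forall>i\<in>{l..r}. (pacT ^^ t) x i \<noteq> SG"
    by (rule gap_SG_vanishes)
  have walls: "\<forall>\<^sub>F t in sequentially. (pacT ^^ t) x (r + 1) = S1 \<and> (pacT ^^ t) x (l - 1) \<noteq> SP"
    using right_door left_no_SP by (rule eventually_conj)
  have no_SP: "\<forall>\<^sub>F t in sequentially. \<forall>i\<in>{l..r}. (pacT ^^ t) x i \<noteq> SP"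
    by (rule gap_SP_vanishes[OF eventually_conj[OF no_SG walls]])
  have no_SK: "\<forall>\<^sub>F t in sequentially. \<forall>i\<in>{l..r}. (pacT ^^ t) x i \<noteq> SK"
    by (rule gap_SK_vanishes[OF eventually_conj[OF no_SP walls]])
  from no_door no_SG no_SP no_SK show ?thesis
  proof eventually_elim
    case (elim t)
    show ?case
    proof
      fix i assume "i \<in> {l..r}"
      with elim show "(pacT ^^ t) x i = S0" by (cases "(pacT ^^ t) x i") auto
    qed
  qed
qed

definition ends_with_door :: "(int \<Rightarrow> cell) \<Rightarrow> int \<Rightarrow> bool" where
  "ends_with_door x n \<longleftrightarrow> left_quiet x \<and> x n = S1 \<and> (\<forall>i>n. x i = S0)"

lemma ends_with_door_pacT:
  assumes "ends_with_door x n"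
  shows "ends_with_door (pacT x) n"
proof -
  have "pacT x i = S0" if "n < i" for i
  proof -
    from assms that have "x (i - 1) \<in> {S0,S1}" by (cases "i - 1 = n") (auto simp: ends_with_door_def)
    with assms that show ?thesis by (auto simp: ends_with_door_def pacT_def pac_rule_def)
  qed
  moreover from assms have "pacT x n = S1" by (simp add: ends_with_door_def pacT_def pac_rule_door)
  ultimately show ?thesis using assms by (simp add: ends_with_door_def left_quiet_pacT)
qed

lemma ends_with_door_funpow: "ends_with_door x n \<Longrightarrow> ends_with_door ((pacT ^^ t) x) n"
  by (induction t) (simp_all add: ends_with_door_pacT)

lemma ends_with_door_word_pt: "ends_with_door (word_pt (w @ [S1])) (int (length w))"
  by (auto simp: ends_with_door_def left_quiet_def word_pt_def)

definition doors :: "(int \<Rightarrow> cell) \<Rightarrow> int set" where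
  "doors x = {i. x i \<in> {S1,SD}}"

lemma doors_pacT: "doors x \<subseteq> doors (pacT x)"
  by (auto simp: doors_def pacT_def pac_rule_door)

lemma doors_subset: "ends_with_door x n \<Longrightarrow> doors x \<subseteq> {0..n}"
  by (force simp: doors_def ends_with_door_def left_quiet_def not_less)

lemma mono_bounded_sets_eventually_const:
  fixes F :: "nat \<Rightarrow> 'a set"
  assumes "mono F" "finite A" "\<And>t. F t \<subseteq> A"
  shows "\<exists>D. \<forall>\<^sub>F t in sequentially. F t = D"
proof -
  have fin: "finite (range (\<lambda>t. card (F t)))"
    by (rule finite_subset[of _ "{..card A}"]) (use card_mono[OF assms(2,3)] in auto)
  then obtain t0 where "card (F t0) = Max (range (\<lambda>t. card (F t)))"
    using Max_in by fastforce
  with fin have t0: "card (F t) \<le> card (F t0)" for t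
    by simp
  have "F t = F t0" if "t0 \<le> t" for t
    using card_seteq[OF finite_subset[OF assms(3) assms(2)] monoD[OF assms(1) that] t0] by simp
  then show ?thesis unfolding eventually_sequentially by blast
qed

lemma eventually_doors_const:
  assumes "ends_with_door x n"
  shows "\<exists>D. \<forall>\<^sub>F t in sequentially. doors ((pacT ^^ t) x) = D"
proof (rule mono_bounded_sets_eventually_const)
  show "mono (\<lambda>t. doors ((pacT ^^ t) x))"
    unfolding mono_iff_le_Suc by (simp add: doors_pacT)
  show "doors ((pacT ^^ t) x) \<subseteq> {0..n}" for t
    using assms by (intro doors_subset ends_with_door_funpow)
qed simp

lemma maximal_gap:
  fixes D :: "int set"
  assumes "finite D" "i \<notin> D" "0 \<le> i" "m \<in> D" "i < m"
  obtains l r where "l \<le> i" "i \<le> r" "\<forall>j\<in>{l..r}. j \<notin> D" "r + 1 \<in> D" "l = 0 \<or> l - 1 \<in> D"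
proof
  let ?R = "{j \<in> D. i < j}" and ?L = "{j \<in> insert (-1) D. j < i}"
  have R: "finite ?R" "?R \<noteq> {}" and L: "finite ?L" "?L \<noteq> {}"
    using assms by auto
  show "Max ?L + 1 \<le> i" "Min ?R - 1 + 1 \<in> D" "i \<le> Min ?R - 1"
    using Max_in[OF L] Min_in[OF R] by auto
  show "\<forall>j\<in>{Max ?L + 1..Min ?R - 1}. j \<notin> D"
  proof
    fix j assume j: "j \<in> {Max ?L + 1..Min ?R - 1}"
    show "j \<notin> D"
    proof
      assume "j \<in> D"
      with assms(2) j Max_ge[OF L(1), of j] Min_le[OF R(1), of j] show False
        by (cases j i rule: linorder_cases) auto
    qed
  qed
  show "Max ?L + 1 = 0 \<or> Max ?L + 1 - 1 \<in> D"
    using Max_in[OF L] by auto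
qed

lemma eventually_door_cell_open:
  assumes D: "\<forall>\<^sub>F t in sequentially. doors ((pacT ^^ t) x) = D" and "i \<in> D"
    and right: "\<forall>\<^sub>F t in sequentially. (pacT ^^ t) x (i + 1) \<in> {S0,S1}"
  shows "\<forall>\<^sub>F t in sequentially. (pacT ^^ t) x i = S1"
proof -
  have "\<forall>\<^sub>F t in sequentially. (pacT ^^ Suc t) x i = S1"
    using D right
  proof eventually_elim
    case (elim t)
    with \<open>i \<in> D\<close> have "(pacT ^^ t) x i \<in> {S1,SD}" by (auto simp: doors_def)
    with elim show ?case by (auto simp: pacT_def pac_rule_door)
  qed
  then show ?thesis by (rule eventually_sequentially_Suc[THEN iffD1])
qed

lemma eventual_doors_bounds:
  assumes x: "ends_with_door x n" and D: "\<forall>\<^sub>F t in sequentially. doors ((pacT ^^ t) x) = D"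
  shows "D \<subseteq> {0..n}" "n \<in> D"
proof -
  obtain t where "doors ((pacT ^^ t) x) = D"
    using D eventually_happens' sequentially_bot by blast
  with doors_subset[OF ends_with_door_funpow[OF x]] ends_with_door_funpow[OF x, of t]
  show "D \<subseteq> {0..n}" "n \<in> D" by (auto simp: doors_def ends_with_door_def)
qed

lemma eventually_gap_cell_empty:
  assumes x: "ends_with_door x n" and D: "\<forall>\<^sub>F t in sequentially. doors ((pacT ^^ t) x) = D"
    and i: "i \<notin> D" "0 \<le> i" "i \<le> n"
    and right_quiet: "\<And>j. i < j \<Longrightarrow> j \<in> D \<Longrightarrow> \<forall>\<^sub>F t in sequentially. (pacT ^^ t) x j \<in> {S0,S1}"
  shows "\<forall>\<^sub>F t in sequentially. (pacT ^^ t) x i = S0"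
proof -
  note D_bounds = eventual_doors_bounds[OF x D]
  from D_bounds(1) have fin: "finite D" by (rule finite_subset) simp
  from i D_bounds(2) have "i < n" by (cases "i = n") auto
  obtain l r where lr: "l \<le> i" "i \<le> r" "\<forall>j\<in>{l..r}. j \<notin> D"
    and r: "r + 1 \<in> D" and l: "l = 0 \<or> l - 1 \<in> D"
    by (rule maximal_gap[OF fin i(1,2) D_bounds(2) \<open>i < n\<close>])
  have "\<forall>\<^sub>F t in sequentially. \<forall>j\<in>{l..r}. (pacT ^^ t) x j = S0"
  proof (rule gap_clears)
    show "\<forall>\<^sub>F t in sequentially. \<forall>j\<in>{l..r}. (pacT ^^ t) x j \<notin> {S1,SD}"
      using D by eventually_elim (use lr in \<open>auto simp: doors_def\<close>)
    from r lr have "\<forall>\<^sub>F t in sequentially. (pacT ^^ t) x (r + 1) \<in> {S0,S1}"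
      by (intro right_quiet) auto
    with D show "\<forall>\<^sub>F t in sequentially. (pacT ^^ t) x (r + 1) = S1"
      by eventually_elim (use r in \<open>auto simp: doors_def\<close>)
    show "\<forall>\<^sub>F t in sequentially. (pacT ^^ t) x (l - 1) \<noteq> SP"
      using D
    proof eventually_elim
      case (elim t)
      from l show ?case
      proof
        assume "l = 0"
        have "(pacT ^^ t) x (-1) \<in> {S0,SG,SK}"
          using ends_with_door_funpow[OF x, of t] by (simp add: ends_with_door_def left_quiet_def)
        with \<open>l = 0\<close> show ?thesis by auto
      qed (use elim in \<open>auto simp: doors_def\<close>)
    qed
  qed
  then show ?thesis by eventually_elim (use lr in auto)
qed

lemma eventually_quiescent_cell:
  assumes x: "ends_with_door x n" and D: "\<forall>\<^sub>F t in sequentially. doors ((pacT ^^ t) x) = D"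
    and "0 \<le> i" "i \<le> n"
  shows "\<forall>\<^sub>F t in sequentially. (pacT ^^ t) x i \<in> {S0,S1}"
  using assms(3,4)
proof (induction "nat (n - i)" arbitrary: i rule: less_induct)
  case less
  have IH: "\<forall>\<^sub>F t in sequentially. (pacT ^^ t) x j \<in> {S0,S1}" if "i < j" "j \<le> n" for j
    using less.hyps[of j] that less.prems by auto
  show ?case
  proof (cases "i \<in> D")
    case True
    show ?thesis
    proof (cases "i = n")
      case True
      with ends_with_door_funpow[OF x] show ?thesis by (simp add: ends_with_door_def)
    next
      case False
      with less.prems have "\<forall>\<^sub>F t in sequentially. (pacT ^^ t) x (i + 1) \<in> {S0,S1}"
        by (intro IH) auto
      with D \<open>i \<in> D\<close> have "\<forall>\<^sub>F t in sequentially. (pacT ^^ t) x i = S1"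
        by (rule eventually_door_cell_open)
      then show ?thesis by (rule eventually_mono) simp
    qed
  next
    case False
    have "\<forall>\<^sub>F t in sequentially. (pacT ^^ t) x i = S0"
    proof (rule eventually_gap_cell_empty[OF x D False less.prems])
      fix j assume "i < j" "j \<in> D"
      with eventual_doors_bounds(1)[OF x D] show "\<forall>\<^sub>F t in sequentially. (pacT ^^ t) x j \<in> {S0,S1}"
        by (intro IH) auto
    qed
    then show ?thesis by (rule eventually_mono) simp
  qed
qed

lemma eventually_fixed_word:
  assumes x: "ends_with_door x n"
  obtains \<sigma> where "set \<sigma> \<subseteq> {S0,S1}" "int (length \<sigma>) = n + 1"
    "\<forall>\<^sub>F t in sequentially. \<forall>i\<ge>0. (pacT ^^ t) x i = word_pt \<sigma> i"
proof -
  obtain D where D: "\<forall>\<^sub>F t in sequentially. doors ((pacT ^^ t) x) = D"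
    using eventually_doors_const[OF x] by blast
  from x have "0 \<le> n" by (auto simp: ends_with_door_def left_quiet_def not_le[symmetric])
  define \<sigma> where "\<sigma> = map (\<lambda>k. if int k \<in> D then S1 else S0) [0..<nat n + 1]"
  have "\<forall>\<^sub>F t in sequentially. \<forall>i\<in>{0..n}. (pacT ^^ t) x i \<in> {S0,S1}"
    using eventually_quiescent_cell[OF x D] by (simp add: eventually_ball_finite)
  with D have "\<forall>\<^sub>F t in sequentially. \<forall>i\<ge>0. (pacT ^^ t) x i = word_pt \<sigma> i"
  proof eventually_elim
    case (elim t)
    show ?case
    proof (intro allI impI)
      fix i :: int assume "0 \<le> i"
      show "(pacT ^^ t) x i = word_pt \<sigma> i"
      proof (cases "i \<le> n")
        case True
        with \<open>0 \<le> i\<close> elim(2) have "(pacT ^^ t) x i \<in> {S0,S1}" by simp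
        with elim(1) have "(pacT ^^ t) x i = (if i \<in> D then S1 else S0)"
          by (auto simp: doors_def)
        with True \<open>0 \<le> i\<close> show ?thesis by (simp add: \<sigma>_def word_pt_def del: upt_Suc)
      next
        case False
        with ends_with_door_funpow[OF x, of t] \<open>0 \<le> n\<close> show ?thesis
          by (simp add: ends_with_door_def word_pt_def \<sigma>_def del: upt_Suc)
      qed
    qed
  qed
  moreover have "set \<sigma> \<subseteq> {S0,S1}" "int (length \<sigma>) = n + 1"
    using \<open>0 \<le> n\<close> by (auto simp: \<sigma>_def)
  ultimately show ?thesis using that by blast
qed

lemma pacT_upd_SK_beyond_door:
  assumes "ends_with_door x n" "n + 2 \<le> p"
  shows "pacT (x(p := SK)) = (pacT x)(p - 1 := SK)"
proof
  fix i
  from assms have left: "x (p - 2) \<in> {S0,S1}" by (cases "p - 2 = n") (auto simp: ends_with_door_def)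
  from assms have zero: "x j = S0" if "p - 1 \<le> j" for j
    using that by (auto simp: ends_with_door_def)
  consider "i = p - 1" | "i = p" | "i = p + 1" | "i \<notin> {p - 1, p, p + 1}" by blast
  then show "pacT (x(p := SK)) i = ((pacT x)(p - 1 := SK)) i"
  proof cases
    case 1
    with left zero[of "p - 1"] show ?thesis by (auto simp: pacT_def pac_rule_def)
  next
    case 2
    with zero[of "p - 1"] zero[of p] zero[of "p + 1"] show ?thesis by (simp add: pacT_def pac_rule_def)
  next
    case 3
    with zero[of p] zero[of "p + 1"] zero[of "p + 2"] show ?thesis by (simp add: pacT_def pac_rule_def)
  qed (auto simp: pacT_def)
qed

lemma funpow_upd_SK_beyond_door:
  assumes "ends_with_door x n" "n + 1 + int t \<le> p"
  shows "(pacT ^^ t) (x(p := SK)) = ((pacT ^^ t) x)(p - int t := SK)"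
  using assms(2)
proof (induction t)
  case (Suc t)
  have "(pacT ^^ t) (x(p := SK)) = ((pacT ^^ t) x)(p - int t := SK)"
    by (rule Suc.IH) (use Suc.prems in simp)
  then have "(pacT ^^ Suc t) (x(p := SK)) = pacT (((pacT ^^ t) x)(p - int t := SK))" by simp
  also have "\<dots> = ((pacT ^^ Suc t) x)(p - int (Suc t) := SK)"
    using Suc.prems by (simp add: pacT_upd_SK_beyond_door[OF ends_with_door_funpow[OF assms(1)]] algebra_simps)
  finally show ?case .
qed simp

lemma word_pt_append_SK:
  "word_pt (u @ replicate m S0 @ [SK]) = (word_pt u)(int (length u) + int m := SK)"
proof
  fix i :: int
  show "word_pt (u @ replicate m S0 @ [SK]) i = ((word_pt u)(int (length u) + int m := SK)) i"
  proof (cases "i < 0")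
    case False
    then obtain k where "i = int k" by (metis nonneg_int_cases not_less)
    then show ?thesis by (auto simp: word_pt_def nth_append)
  qed (simp add: word_pt_def)
qed

lemma word_config_upd_SK:
  assumes "left_quiet y" "\<forall>i\<ge>0. y i = word_pt \<sigma> i"
  shows "word_config (y(int (length \<sigma>) := SK)) (\<sigma> @ [SK])"
  using assms by (auto simp: word_config_def left_quiet_def word_pt_def nth_append)

lemma word_config_after_SK_arrives:
  assumes x: "ends_with_door x n" and \<sigma>: "int (length \<sigma>) = n + 1"
    and fixed: "\<forall>i\<ge>0. (pacT ^^ m) x i = word_pt \<sigma> i"
  shows "word_config ((pacT ^^ m) (x(n + 1 + int m := SK))) (\<sigma> @ [SK])"
proof -
  have "(pacT ^^ m) (x(n + 1 + int m := SK)) = ((pacT ^^ m) x)(int (length \<sigma>) := SK)"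
    using funpow_upd_SK_beyond_door[OF x, of m "n + 1 + int m"] \<sigma> by simp
  moreover have "left_quiet ((pacT ^^ m) x)"
    using ends_with_door_funpow[OF x] by (simp add: ends_with_door_def)
  ultimately show ?thesis using fixed by (simp add: word_config_upd_SK)
qed

theorem mainTheorem1:
  fixes w :: "cell list"
  assumes "w \<noteq> []"
  shows "\<exists>N M :: nat. \<forall>j :: nat.
           (pacT ^^ (N + j)) (word_pt (w @ [S1] @ replicate (M + j) S0 @ [SK])) 0 \<in> {SG, SK, SD}"
proof -
  define x where "x = word_pt (w @ [S1])"
  define n where "n = int (length w)"
  have x: "ends_with_door x n" unfolding x_def n_def by (rule ends_with_door_word_pt)
  obtain \<sigma> where \<sigma>: "set \<sigma> \<subseteq> {S0,S1}" "int (length \<sigma>) = n + 1"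
    and "\<forall>\<^sub>F t in sequentially. \<forall>i\<ge>0. (pacT ^^ t) x i = word_pt \<sigma> i"
    using eventually_fixed_word[OF x] by blast
  then obtain T where T: "\<And>t. T \<le> t \<Longrightarrow> \<forall>i\<ge>0. (pacT ^^ t) x i = word_pt \<sigma> i"
    unfolding eventually_sequentially by blast
  from \<sigma>(1) have "one_particle \<sigma> SK []" by (simp add: one_particle_def)
  then obtain s where s: "\<And>y. word_config y (\<sigma> @ [SK]) \<Longrightarrow> (pacT ^^ s) y 0 \<in> {SG,SK,SD}"
    using one_particle_reaches_origin by fastforce
  have "(pacT ^^ (s + m)) (word_pt (w @ [S1] @ replicate m S0 @ [SK])) 0 \<in> {SG,SK,SD}"
    if "T \<le> m" for m
  proof -
    have "word_pt (w @ [S1] @ replicate m S0 @ [SK]) = x(n + 1 + int m := SK)"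
      using word_pt_append_SK[of "w @ [S1]" m] by (simp add: x_def n_def ac_simps)
    with word_config_after_SK_arrives[OF x \<sigma>(2) T[OF that]] s show ?thesis
      by (simp add: funpow_add)
  qed
  then have "\<forall>j. (pacT ^^ (s + T + j)) (word_pt (w @ [S1] @ replicate (T + j) S0 @ [SK])) 0 \<in> {SG,SK,SD}"
    by (simp add: add.assoc)
  then show ?thesis by blast
qed

end
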